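(* Let $\Gamma$ be a typing context, ${\mathcal K}$ a consistent set of constraints, $\tau$ a type, $t$ a term of type $\tau$ and $s \in \mathit{not}[\tau](t)$. Let $u$ be a term with $FV(u)\subseteq \Gamma$, and let $\vec X{:}\vec\tau$ be a list of typed variables with $FV(s)\cup FV(t)\subseteq \vec X$. Then it is not the case that both $\Gamma;{\mathcal K}\models \exists \vec X{:}\vec\tau.~u\approx t$ and $\Gamma;{\mathcal K}\models \exists \vec X{:}\vec\tau.~u\approx s$.
   Context: Setting: nominal logic terms over a signature consisting of base types $\delta$, name types $\nu$, and function symbols $f:\tau\to\delta$. Types: $\tau ::= \delta \mid \tau\times\tau' \mid \mathbf{1} \mid \nu \mid \langle\nu\rangle\tau$ (the last is the abstraction type). Terms: $t,u ::= \mathsf{a} \mid \pi\cdot X \mid \langle\rangle \mid \langle t,u\rangle \mid \langle\mathsf{a}\rangle t \mid f(t)$, where $\mathsf{a}$ ranges over names, $X$ over logic variables, and $\pi$ over finite permutations of names (composites of swappings $(\mathsf{a}\ \mathsf{b})$); $\langle\mathsf{a}\rangle t$ is name-abstraction. Ground equality $\approx$ is equality modulo $\alpha$-equivalence of abstractions (i.e. $\langle\mathsf{a}\rangle t\approx\langle\mathsf{b}\rangle u$ iff $\mathsf{a}=\mathsf{b}$ and $t\approx u$, or $\mathsf{a}$ is distinct from $\mathsf{b}$, $\mathsf{a}$ is not free in $u$, and $t\approx (\mathsf{a}\ \mathsf{b})\cdot u$), and componentwise otherwise; freshness $\mathsf{a}\mathrel{\#} t$ means $\mathsf{a}$ does not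 occur free in $t$. Constraints: $C ::= \top \mid t\approx u \mid t\mathrel{\#}u \mid C\wedge C' \mid \exists X{:}\tau.~C \mid \text{И}\mathsf{a}{:}\nu.~C$. For a map $\theta$ from variables to ground terms: $\theta\models t\approx u$ iff $\theta(t)\approx\theta(u)$; $\theta\models t\mathrel{\#}u$ iff $\theta(t)\mathrel{\#}\theta(u)$; conjunction as usual; $\theta\models\exists X{:}\tau.C$ iff for some ground $t:\tau$, $\theta[X:=t]\models C$; $\theta\models \text{И}\mathsf{a}{:}\nu.C$ iff for some name $\mathsf{b}$ fresh for $\theta$ and $C$, $\theta\models C[\mathsf{b}/\mathsf{a}]$. A context $\Gamma$ is a list of typed variable and name bindings. $\Gamma;{\mathcal K}\models C$ means: for every map $\theta$ from the variables of $\Gamma$ to ground terms, if $\theta$ satisfies every constraint in ${\mathcal K}$ then $\theta\models C$. ${\mathcal K}$ is consistent if some such $\theta$ satisfies all of ${\mathcal K}$. Term complementation $\mathit{not}[\tau]$ maps a term of type $\tau$ to a finite set of terms of type $\tau$, where each occurrence of $\_$ denotes a fresh (anonymous) variable: $\mathit{not}[\tau](t)=\emptyset$ if $\tau\in\{\mathbf{1},\nu,\langle\nu\rangle\tau'\}$ or $t$ is a variable; $\mathit{not}[\tau_1\times\tau_2](\langle t_1,t_2\rangle)=\{\langle s_1,\_\rangle \mid s_1\in\mathit{not}[\tau_1](t_1)\}\cup\{\langle\_,s_2\rangle\mid s_2\in\mathit{not}[\tau_2](t_2)\}$; for $f:\tau\to\delta$, $\mathit{not}[\delta](f(t))=\{g(\_)\mid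 g:\sigma\to\delta \text{ a function symbol}, g\neq f\}\cup\{f(s)\mid s\in \mathit{not}[\tau](t)\}$. *)

theory Defs
  imports Main
begin

text \<open>Names (atoms) carry their name type (sort) and an index; there are
infinitely many names of every name type.\<close>
datatype atom = Atom (asort: string) (aidx: nat)

datatype ty = TBase string | TProd ty ty | TUnit | TName string | TAbs string ty

type_synonym var = string

text \<open>A permutation is a list of swappings; [(a1,b1),...,(an,bn)] denotes
(a1 b1) o ... o (an bn).\<close>
type_synonym perm = "(atom \<times> atom) list"

datatype trm =
    Nm atom
  | Sus perm var
  | TUnitC
  | Pair trm trm
  | Abs atom trm
  | App string trm

text \<open>A signature assigns to a function symbol f:tau->delta its argument type
and result base type (None: not a symbol of the signature).\<close>
type_synonym sig = "string \<Rightarrow> (ty \<times> string) option"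

definition swap :: "atom \<Rightarrow> atom \<Rightarrow> atom \<Rightarrow> atom" where
  "swap a b c = (if c = a then b else if c = b then a else c)"

definition perm_atom :: "perm \<Rightarrow> atom \<Rightarrow> atom" where
  "perm_atom p c = foldr (\<lambda>(a,b) c. swap a b c) p c"

primrec perm_trm :: "perm \<Rightarrow> trm \<Rightarrow> trm" where
  "perm_trm p (Nm a) = Nm (perm_atom p a)"
| "perm_trm p (Sus q X) = Sus (p @ q) X"
| "perm_trm p TUnitC = TUnitC"
| "perm_trm p (Pair t u) = Pair (perm_trm p t) (perm_trm p u)"
| "perm_trm p (Abs a t) = Abs (perm_atom p a) (perm_trm p t)"
| "perm_trm p (App f t) = App f (perm_trm p t)"

text \<open>Applying a substitution theta (values are meant to be ground terms).\<close>
primrec subst :: "(var \<Rightarrow> trm) \<Rightarrow> trm \<Rightarrow> trm" where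
  "subst \<theta> (Nm a) = Nm a"
| "subst \<theta> (Sus p X) = perm_trm p (\<theta> X)"
| "subst \<theta> TUnitC = TUnitC"
| "subst \<theta> (Pair t u) = Pair (subst \<theta> t) (subst \<theta> u)"
| "subst \<theta> (Abs a t) = Abs a (subst \<theta> t)"
| "subst \<theta> (App f t) = App f (subst \<theta> t)"

primrec fv :: "trm \<Rightarrow> var set" where
  "fv (Nm a) = {}"
| "fv (Sus p X) = {X}"
| "fv TUnitC = {}"
| "fv (Pair t u) = fv t \<union> fv u"
| "fv (Abs a t) = fv t"
| "fv (App f t) = fv t"

primrec var_occs :: "trm \<Rightarrow> var list" where
  "var_occs (Nm a) = []"
| "var_occs (Sus p X) = [X]"
| "var_occs TUnitC = []"
| "var_occs (Pair t u) = var_occs t @ var_occs u"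
| "var_occs (Abs a t) = var_occs t"
| "var_occs (App f t) = var_occs t"

definition ground :: "trm \<Rightarrow> bool" where
  "ground t \<longleftrightarrow> fv t = {}"

primrec fn :: "trm \<Rightarrow> atom set" where
  "fn (Nm a) = {a}"
| "fn (Sus p X) = {}"
| "fn TUnitC = {}"
| "fn (Pair t u) = fn t \<union> fn u"
| "fn (Abs a t) = fn t - {a}"
| "fn (App f t) = fn t"

primrec atoms_trm :: "trm \<Rightarrow> atom set" where
  "atoms_trm (Nm a) = {a}"
| "atoms_trm (Sus p X) = fst ` set p \<union> snd ` set p"
| "atoms_trm TUnitC = {}"
| "atoms_trm (Pair t u) = atoms_trm t \<union> atoms_trm u"
| "atoms_trm (Abs a t) = insert a (atoms_trm t)"
| "atoms_trm (App f t) = atoms_trm t"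

primrec ren_trm :: "atom \<Rightarrow> atom \<Rightarrow> trm \<Rightarrow> trm" where
  "ren_trm a b (Nm c) = Nm (swap a b c)"
| "ren_trm a b (Sus p X) = Sus (map (\<lambda>(c,d). (swap a b c, swap a b d)) p) X"
| "ren_trm a b TUnitC = TUnitC"
| "ren_trm a b (Pair t u) = Pair (ren_trm a b t) (ren_trm a b u)"
| "ren_trm a b (Abs c t) = Abs (swap a b c) (ren_trm a b t)"
| "ren_trm a b (App f t) = App f (ren_trm a b t)"

definition perm_ok :: "perm \<Rightarrow> bool" where
  "perm_ok p \<longleftrightarrow> (\<forall>(a,b)\<in>set p. asort a = asort b)"

inductive has_ty :: "sig \<Rightarrow> (var \<Rightarrow> ty option) \<Rightarrow> trm \<Rightarrow> ty \<Rightarrow> bool" where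
  ty_name: "has_ty \<Sigma> \<Delta> (Nm a) (TName (asort a))"
| ty_sus: "\<Delta> X = Some \<tau> \<Longrightarrow> perm_ok p \<Longrightarrow> has_ty \<Sigma> \<Delta> (Sus p X) \<tau>"
| ty_unit: "has_ty \<Sigma> \<Delta> TUnitC TUnit"
| ty_pair: "has_ty \<Sigma> \<Delta> t \<tau>1 \<Longrightarrow> has_ty \<Sigma> \<Delta> u \<tau>2 \<Longrightarrow> has_ty \<Sigma> \<Delta> (Pair t u) (TProd \<tau>1 \<tau>2)"
| ty_abs: "has_ty \<Sigma> \<Delta> t \<tau> \<Longrightarrow> has_ty \<Sigma> \<Delta> (Abs a t) (TAbs (asort a) \<tau>)"
| ty_app: "\<Sigma> f = Some (\<sigma>, \<delta>) \<Longrightarrow> has_ty \<Sigma> \<Delta> t \<sigma> \<Longrightarrow> has_ty \<Sigma> \<Delta> (App f t) (TBase \<delta>)"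

inductive aeq :: "trm \<Rightarrow> trm \<Rightarrow> bool" where
  aeq_name: "aeq (Nm a) (Nm a)"
| aeq_unit: "aeq TUnitC TUnitC"
| aeq_pair: "aeq t1 u1 \<Longrightarrow> aeq t2 u2 \<Longrightarrow> aeq (Pair t1 t2) (Pair u1 u2)"
| aeq_app: "aeq t u \<Longrightarrow> aeq (App f t) (App f u)"
| aeq_abs1: "aeq t u \<Longrightarrow> aeq (Abs a t) (Abs a u)"
| aeq_abs2: "a \<noteq> b \<Longrightarrow> a \<notin> fn u \<Longrightarrow> aeq t (perm_trm [(a,b)] u) \<Longrightarrow> aeq (Abs a t) (Abs b u)"

datatype constr =
    CTrue
  | CEq trm trm
  | CFresh trm trm
  | CAnd constr constr
  | CEx var ty constr
  | CNew atom constr     \<comment> \<open>new-quantifier; the name type is the sort of the atom\<close>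

primrec fv_c :: "constr \<Rightarrow> var set" where
  "fv_c CTrue = {}"
| "fv_c (CEq t u) = fv t \<union> fv u"
| "fv_c (CFresh t u) = fv t \<union> fv u"
| "fv_c (CAnd C D) = fv_c C \<union> fv_c D"
| "fv_c (CEx X \<tau> C) = fv_c C - {X}"
| "fv_c (CNew a C) = fv_c C"

primrec atoms_c :: "constr \<Rightarrow> atom set" where
  "atoms_c CTrue = {}"
| "atoms_c (CEq t u) = atoms_trm t \<union> atoms_trm u"
| "atoms_c (CFresh t u) = atoms_trm t \<union> atoms_trm u"
| "atoms_c (CAnd C D) = atoms_c C \<union> atoms_c D"
| "atoms_c (CEx X \<tau> C) = atoms_c C"
| "atoms_c (CNew a C) = insert a (atoms_c C)"

text \<open>C[b/a] for b not occurring in C: renaming a to b everywhere.\<close>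
primrec ren_c :: "atom \<Rightarrow> atom \<Rightarrow> constr \<Rightarrow> constr" where
  "ren_c a b CTrue = CTrue"
| "ren_c a b (CEq t u) = CEq (ren_trm a b t) (ren_trm a b u)"
| "ren_c a b (CFresh t u) = CFresh (ren_trm a b t) (ren_trm a b u)"
| "ren_c a b (CAnd C D) = CAnd (ren_c a b C) (ren_c a b D)"
| "ren_c a b (CEx X \<tau> C) = CEx X \<tau> (ren_c a b C)"
| "ren_c a b (CNew c C) = CNew (swap a b c) (ren_c a b C)"

lemma size_ren_c[simp]: "size (ren_c a b C) = size C"
  by (induction C) auto

function sat :: "sig \<Rightarrow> (var \<Rightarrow> trm) \<Rightarrow> constr \<Rightarrow> bool" where
  "sat \<Sigma> \<theta> CTrue = True"
| "sat \<Sigma> \<theta> (CEq t u) = aeq (subst \<theta> t) (subst \<theta> u)"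
| "sat \<Sigma> \<theta> (CFresh t u) = (\<exists>a. subst \<theta> t = Nm a \<and> a \<notin> fn (subst \<theta> u))"
| "sat \<Sigma> \<theta> (CAnd C D) = (sat \<Sigma> \<theta> C \<and> sat \<Sigma> \<theta> D)"
| "sat \<Sigma> \<theta> (CEx X \<tau> C) =
     (\<exists>g. ground g \<and> has_ty \<Sigma> Map.empty g \<tau> \<and> sat \<Sigma> (\<theta>(X := g)) C)"
| "sat \<Sigma> \<theta> (CNew a C) =
     (\<exists>b. asort b = asort a \<and> b \<notin> atoms_c C \<and> (\<forall>X\<in>fv_c C. b \<notin> fn (\<theta> X))
          \<and> sat \<Sigma> \<theta> (ren_c a b C))"
  by pat_completeness auto
termination
  by (relation "measure (\<lambda>(\<Sigma>, \<theta>, C). size C)") auto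

fun exs :: "(var \<times> ty) list \<Rightarrow> constr \<Rightarrow> constr" where
  "exs [] C = C"
| "exs ((X, \<tau>) # xs) C = CEx X \<tau> (exs xs C)"

datatype bind = VarB var ty | NameB atom

definition ctx_vars :: "bind list \<Rightarrow> var \<Rightarrow> ty option" where
  "ctx_vars \<Gamma> = map_of (rev (List.map_filter
      (\<lambda>b. case b of VarB X \<tau> \<Rightarrow> Some (X, \<tau>) | NameB a \<Rightarrow> None) \<Gamma>))"

definition wf_val :: "sig \<Rightarrow> bind list \<Rightarrow> (var \<Rightarrow> trm) \<Rightarrow> bool" where
  "wf_val \<Sigma> \<Gamma> \<theta> \<longleftrightarrow>
     (\<forall>X \<tau>. ctx_vars \<Gamma> X = Some \<tau> \<longrightarrow> ground (\<theta> X) \<and> has_ty \<Sigma> Map.empty (\<theta> X) \<tau>)"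

definition entails :: "sig \<Rightarrow> bind list \<Rightarrow> constr set \<Rightarrow> constr \<Rightarrow> bool" where
  "entails \<Sigma> \<Gamma> K C \<longleftrightarrow>
     (\<forall>\<theta>. wf_val \<Sigma> \<Gamma> \<theta> \<longrightarrow> (\<forall>k\<in>K. sat \<Sigma> \<theta> k) \<longrightarrow> sat \<Sigma> \<theta> C)"

definition consistent :: "sig \<Rightarrow> bind list \<Rightarrow> constr set \<Rightarrow> bool" where
  "consistent \<Sigma> \<Gamma> K \<longleftrightarrow> (\<exists>\<theta>. wf_val \<Sigma> \<Gamma> \<theta> \<and> (\<forall>k\<in>K. sat \<Sigma> \<theta> k))"

text \<open>not_rel Sigma tau t s: s is an element of not[tau](t), where each
occurrence of the anonymous variable is represented by some variable Y
(identity permutation). Freshness/distinctness of these variables is imposed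
in not_set below.\<close>
inductive not_rel :: "sig \<Rightarrow> ty \<Rightarrow> trm \<Rightarrow> trm \<Rightarrow> bool" where
  not_pair1: "not_rel \<Sigma> \<tau>1 t1 s1 \<Longrightarrow>
     not_rel \<Sigma> (TProd \<tau>1 \<tau>2) (Pair t1 t2) (Pair s1 (Sus [] Y))"
| not_pair2: "not_rel \<Sigma> \<tau>2 t2 s2 \<Longrightarrow>
     not_rel \<Sigma> (TProd \<tau>1 \<tau>2) (Pair t1 t2) (Pair (Sus [] Y) s2)"
| not_other: "\<Sigma> f = Some (\<tau>, \<delta>) \<Longrightarrow> \<Sigma> g = Some (\<sigma>, \<delta>) \<Longrightarrow> g \<noteq> f \<Longrightarrow>
     not_rel \<Sigma> (TBase \<delta>) (App f t) (App g (Sus [] Y))"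
| not_same: "\<Sigma> f = Some (\<tau>, \<delta>) \<Longrightarrow> not_rel \<Sigma> \<tau> t s \<Longrightarrow>
     not_rel \<Sigma> (TBase \<delta>) (App f t) (App f s)"

definition not_set :: "sig \<Rightarrow> ty \<Rightarrow> trm \<Rightarrow> trm set" where
  "not_set \<Sigma> \<tau> t = {s. not_rel \<Sigma> \<tau> t s \<and> distinct (var_occs s) \<and> fv s \<inter> fv t = {}}"

end

theory Submission
  imports Defs
begin

text \<open>Every element of \<open>not[\<tau>](t)\<close> differs from \<open>t\<close> at some position where both have
  a constructor (a different function symbol below a common path of pairs and applications),
  so no ground term is \<open>\<approx>\<close> to an instance of \<open>t\<close> and to an instance of \<open>s\<close>, even under two
  unrelated substitutions. A common model \<open>\<theta>\<close> of \<open>K\<close> would give two extensions of \<open>\<theta>\<close>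
  to \<open>Xs\<close> that agree on \<open>u\<close> and make it equal to an instance of \<open>t\<close> and of \<open>s\<close>
  respectively.\<close>

lemma aeq_PairE:
  assumes "aeq w (Pair u1 u2)"
  obtains w1 w2 where "w = Pair w1 w2" "aeq w1 u1" "aeq w2 u2"
  using assms by (cases rule: aeq.cases) auto

lemma aeq_AppE:
  assumes "aeq w (App f u)"
  obtains w' where "w = App f w'" "aeq w' u"
  using assms by (cases rule: aeq.cases) auto

lemma not_rel_no_common_instance:
  assumes "not_rel \<Sigma> \<tau> t s"
  shows "\<not> (aeq w (subst \<theta>1 t) \<and> aeq w (subst \<theta>2 s))"
  using assms
proof (induction arbitrary: w rule: not_rel.induct)
  case not_pair1
  then show ?case by (auto elim: aeq_PairE)
next
  case not_pair2
  then show ?case by (auto elim: aeq_PairE)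
next
  case not_other
  then show ?case by (auto elim: aeq_AppE)
next
  case not_same
  then show ?case by (auto elim: aeq_AppE)
qed

lemma subst_cong: "(\<And>X. X \<in> fv u \<Longrightarrow> \<theta>1 X = \<theta>2 X) \<Longrightarrow> subst \<theta>1 u = subst \<theta>2 u"
  by (induction u) auto

lemma sat_exsE:
  assumes "sat \<Sigma> \<theta> (exs Xs C)"
  obtains \<theta>' where "\<And>X. X \<notin> set (map fst Xs) \<Longrightarrow> \<theta>' X = \<theta> X" "sat \<Sigma> \<theta>' C"
  using assms
proof (induction Xs arbitrary: \<theta> thesis)
  case Nil
  then show ?case by auto
next
  case (Cons b Xs)
  obtain X \<tau> where b: "b = (X, \<tau>)" by fastforce
  with Cons.prems(2) obtain g where "sat \<Sigma> (\<theta>(X := g)) (exs Xs C)" by auto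
  then obtain \<theta>' where "\<And>Y. Y \<notin> set (map fst Xs) \<Longrightarrow> \<theta>' Y = (\<theta>(X := g)) Y" "sat \<Sigma> \<theta>' C"
    using Cons.IH by blast
  then show ?case
    by (intro Cons.prems(1)[of \<theta>']) (auto simp: b)
qed

lemma entails_consistent_common_model:
  assumes "consistent \<Sigma> \<Gamma> K" "entails \<Sigma> \<Gamma> K C" "entails \<Sigma> \<Gamma> K D"
  obtains \<theta> where "sat \<Sigma> \<theta> C" "sat \<Sigma> \<theta> D"
  using assms unfolding consistent_def entails_def by blast

theorem lemma1:
  fixes \<Sigma> :: sig and \<Gamma> :: "bind list" and K :: "constr set"
    and \<tau> :: ty and t s u :: trm and Xs :: "(var \<times> ty) list"
  assumes "consistent \<Sigma> \<Gamma> K"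
    and "has_ty \<Sigma> (map_of (rev Xs)) t \<tau>"
    and "s \<in> not_set \<Sigma> \<tau> t"
    and "fv u \<subseteq> dom (ctx_vars \<Gamma>)"
    and "set (map fst Xs) \<inter> dom (ctx_vars \<Gamma>) = {}"
    and "fv s \<union> fv t \<subseteq> set (map fst Xs)"
  shows "\<not> (entails \<Sigma> \<Gamma> K (exs Xs (CEq u t)) \<and> entails \<Sigma> \<Gamma> K (exs Xs (CEq u s)))"
proof
  assume "entails \<Sigma> \<Gamma> K (exs Xs (CEq u t)) \<and> entails \<Sigma> \<Gamma> K (exs Xs (CEq u s))"
  then obtain \<theta> where sat_t: "sat \<Sigma> \<theta> (exs Xs (CEq u t))" and sat_s: "sat \<Sigma> \<theta> (exs Xs (CEq u s))"
    using assms(1) by (auto elim: entails_consistent_common_model)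
  obtain \<theta>1 where agree1: "\<And>X. X \<notin> set (map fst Xs) \<Longrightarrow> \<theta>1 X = \<theta> X"
    and t: "sat \<Sigma> \<theta>1 (CEq u t)"
    using sat_t by (rule sat_exsE) (rule that)
  obtain \<theta>2 where agree2: "\<And>X. X \<notin> set (map fst Xs) \<Longrightarrow> \<theta>2 X = \<theta> X"
    and s: "sat \<Sigma> \<theta>2 (CEq u s)"
    using sat_s by (rule sat_exsE) (rule that)
  have "subst \<theta>1 u = subst \<theta>2 u"
  proof (rule subst_cong)
    fix X
    assume "X \<in> fv u"
    then have "X \<notin> set (map fst Xs)"
      using assms(4,5) by blast
    then show "\<theta>1 X = \<theta>2 X"
      by (simp add: agree1 agree2)
  qed
  moreover have "not_rel \<Sigma> \<tau> t s"
    using assms(3) unfolding not_set_def by blast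
  ultimately show False
    using t s not_rel_no_common_instance by fastforce
qed

end
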